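(* The number of $\lfloor\sqrt n\rfloor$-bounded walks with $n$ steps is $\Omega(2^n/\sqrt n)$ as $n\to\infty$.
   Context: A ballot sequence is a 0-1 sequence in which every nonempty prefix contains strictly more 1's than 0's. A 0-1 sequence corresponds to a lattice walk starting at the origin, where each term $1$ is a step $(1,1)$ and each term $0$ is a step $(1,-1)$; a ballot walk is the walk of a ballot sequence. For a positive integer $b$, a $b$-bounded walk is a ballot walk that never visits a point with $y>2b$ and whose endpoint has $y>b$. *)

theory Defs
  imports Complex_Main "HOL-Library.Landau_Symbols"
begin

text \<open>A 0-1 sequence is a list of booleans: True = term 1 = step (1,1),
  False = term 0 = step (1,-1). The height (y-coordinate) after the
  prefix of length k is (#1's) - (#0's) in that prefix.\<close>

definition height :: "bool list \<Rightarrow> int" where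
  "height xs = int (length (filter id xs)) - int (length (filter Not xs))"

definition ballot :: "bool list \<Rightarrow> bool" where
  "ballot xs \<longleftrightarrow> (\<forall>k\<in>{1..length xs}. height (take k xs) > 0)"

definition bounded_walk :: "nat \<Rightarrow> bool list \<Rightarrow> bool" where
  "bounded_walk b xs \<longleftrightarrow> ballot xs \<and>
     (\<forall>k\<le>length xs. height (take k xs) \<le> 2 * int b) \<and> height xs > int b"

definition num_bounded_walks :: "nat \<Rightarrow> nat" where
  "num_bounded_walks n = card {xs. length xs = n \<and> bounded_walk (nat \<lfloor>sqrt (real n)\<rfloor>) xs}"

end

theory Submission
  imports Defs
begin

(*
  Let T(h) be the number of ballot walks of length m + 1 ending above height h.  Such a walk
  starts with an up-step and never returns to 0; reflecting the part of a walk before its first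
  return to 0 pairs the returning walks that start with an up-step with the walks that start
  with a down-step, which gives the ballot theorem T(h) = m choose ((m + h + 1) div 2).
  A ballot walk ending above b that is not b-bounded either ends above 2b, or overshoots 2b and
  ends below 2b + 1; reflecting the latter after its last visit to 2b + 1 maps it injectively
  to a ballot walk ending above 2b + 1.  Hence there are at least T(b) - T(2b) - T(2b + 1)
  b-bounded walks.  For b = floor (sqrt n), comparing consecutive binomial coefficients shows
  that T(2b) < T(b) / 2 and that T(b) is a constant fraction of the central binomial
  coefficient, which is at least 4^k / (2 sqrt k).
*)

section \<open>Levels of a walk and reflections\<close>

lemma height_Nil [simp]: "height [] = 0"
  by (simp add: height_def)

lemma height_Cons [simp]: "height (x # xs) = (if x then 1 else -1) + height xs"
  by (simp add: height_def)

lemma height_append [simp]: "height (xs @ ys) = height xs + height ys"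
  by (simp add: height_def)

lemma height_map_Not [simp]: "height (map Not xs) = - height xs"
  by (induction xs) auto

lemma height_eq_count: "height xs = 2 * int (count_list xs True) - int (length xs)"
  by (induction xs) auto

definition level :: "bool list \<Rightarrow> nat \<Rightarrow> int" where
  "level xs k = height (take k xs)"

lemma level_length: "length xs \<le> k \<Longrightarrow> level xs k = height xs"
  by (simp add: level_def)

lemma level_Suc: "k < length xs \<Longrightarrow> level xs (Suc k) = level xs k + (if xs ! k then 1 else -1)"
  by (simp add: level_def take_Suc_conv_app_nth)

lemma level_map_Not: "level (map Not xs) k = - level xs k"
  by (simp add: level_def take_map)

lemma level_Cons_Suc_0 [simp]: "level (x # xs) (Suc 0) = (if x then 1 else -1)"
  by (simp add: level_def)

lemma ballot_iff_level: "ballot xs \<longleftrightarrow> (\<forall>k. 1 \<le> k \<and> k \<le> length xs \<longrightarrow> 0 < level xs k)"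
  by (auto simp: ballot_def level_def)

lemma level_ivt_up:
  assumes "i \<le> j" "j \<le> length xs" "level xs i \<le> c" "c \<le> level xs j"
  shows "\<exists>k. i \<le> k \<and> k \<le> j \<and> level xs k = c"
  using assms
proof (induction j)
  case (Suc j)
  show ?case
  proof (cases "i \<le> j \<and> c \<le> level xs j")
    case True
    then show ?thesis using Suc by force
  next
    case False
    then have "i = Suc j \<or> level xs (Suc j) = c"
      using Suc.prems level_Suc[of j xs] by (auto split: if_splits)
    then show ?thesis using Suc.prems by auto
  qed
qed simp

lemma level_ivt_down:
  assumes "i \<le> j" "j \<le> length xs" "c \<le> level xs i" "level xs j \<le> c"
  shows "\<exists>k. i \<le> k \<and> k \<le> j \<and> level xs k = c"
  using level_ivt_up[of i j "map Not xs" "- c"] assms by (simp add: level_map_Not)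

definition reflect_prefix :: "nat \<Rightarrow> bool list \<Rightarrow> bool list" where
  "reflect_prefix t xs = map Not (take t xs) @ drop t xs"

definition reflect_suffix :: "nat \<Rightarrow> bool list \<Rightarrow> bool list" where
  "reflect_suffix t xs = take t xs @ map Not (drop t xs)"

lemma length_reflect_prefix [simp]: "length (reflect_prefix t xs) = length xs"
  by (simp add: reflect_prefix_def)

lemma length_reflect_suffix [simp]: "length (reflect_suffix t xs) = length xs"
  by (simp add: reflect_suffix_def)

lemma reflect_prefix_reflect_prefix [simp]: "reflect_prefix t (reflect_prefix t xs) = xs"
  by (simp add: reflect_prefix_def take_map drop_map min_def comp_def)

lemma reflect_suffix_reflect_suffix [simp]: "reflect_suffix t (reflect_suffix t xs) = xs"
  by (simp add: reflect_suffix_def take_map drop_map min_def comp_def)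

lemma take_split: "t \<le> k \<Longrightarrow> take k xs = take t xs @ take (k - t) (drop t xs)"
  by (metis le_add_diff_inverse take_add)

lemma level_reflect_prefix:
  assumes "t \<le> length xs"
  shows "level (reflect_prefix t xs) k = (if k \<le> t then - level xs k else level xs k - 2 * level xs t)"
  using assms take_split[of t k xs]
  by (auto simp: level_def reflect_prefix_def take_map min_def)

lemma level_reflect_suffix:
  assumes "t \<le> length xs"
  shows "level (reflect_suffix t xs) k = (if k \<le> t then level xs k else 2 * level xs t - level xs k)"
  using assms take_split[of t k xs]
  by (auto simp: level_def reflect_suffix_def take_map min_def)

section \<open>The ballot theorem\<close>

lemma finite_lists_length: "finite {ys :: bool list. length ys = m \<and> P ys}"
  using finite_lists_length_eq[of "UNIV :: bool set" m] by (rule rev_finite_subset) auto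

lemma card_lists_count_True: "card {ys. length ys = m \<and> count_list ys True = v} = m choose v"
proof (induction m arbitrary: v)
  case 0
  have "{ys. length ys = 0 \<and> count_list ys True = v} = (if v = 0 then {[]} else {})"
    by auto
  then show ?case by simp
next
  case (Suc m)
  have split: "{ys. length ys = Suc m \<and> count_list ys True = v} =
      Cons False ` {ys. length ys = m \<and> count_list ys True = v} \<union>
      Cons True ` {ys. length ys = m \<and> count_list ys True + 1 = v}"
    by (auto simp: length_Suc_conv)
  show ?case
  proof (cases v)
    case 0
    then show ?thesis unfolding split by (simp add: card_image Suc.IH)
  next
    case (Suc w)
    then show ?thesis unfolding split
      by (subst card_Un_disjoint) (auto simp: finite_lists_length card_image Suc.IH)
  qed
qed

definition walks_ge :: "nat \<Rightarrow> int \<Rightarrow> bool list set" where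
  "walks_ge m h = {ys. length ys = m \<and> h \<le> height ys}"

lemma finite_walks_ge [simp]: "finite (walks_ge m h)"
  by (simp add: walks_ge_def finite_lists_length)

lemma card_walks_ge_step:
  "card (walks_ge m (int h)) = (m choose ((m + Suc h) div 2)) + card (walks_ge m (int h + 2))"
proof -
  define v where "v = (m + Suc h) div 2"
  let ?C = "\<lambda>P. {ys. length ys = m \<and> P (count_list ys True)}"
  have lower: "walks_ge m (int h) = ?C (\<lambda>c. v \<le> c)"
   and upper: "walks_ge m (int h + 2) = ?C (\<lambda>c. Suc v \<le> c)"
    by (auto simp: walks_ge_def height_eq_count v_def)
  have "?C (\<lambda>c. v \<le> c) = ?C (\<lambda>c. c = v) \<union> ?C (\<lambda>c. Suc v \<le> c)"
    by auto
  also have "card \<dots> = card (?C (\<lambda>c. c = v)) + card (?C (\<lambda>c. Suc v \<le> c))"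
    by (rule card_Un_disjoint) (auto simp: finite_lists_length)
  finally show ?thesis
    unfolding lower upper by (simp add: card_lists_count_True v_def)
qed

definition returns_to_zero :: "bool list \<Rightarrow> bool" where
  "returns_to_zero xs \<longleftrightarrow> (\<exists>k. 1 \<le> k \<and> k \<le> length xs \<and> level xs k = 0)"

definition first_return :: "bool list \<Rightarrow> nat" where
  "first_return xs = (LEAST k. 1 \<le> k \<and> level xs k = 0)"

definition reflect_first_return :: "bool list \<Rightarrow> bool list" where
  "reflect_first_return xs = reflect_prefix (first_return xs) xs"

lemma first_return:
  assumes "returns_to_zero xs"
  shows "1 \<le> first_return xs" "first_return xs \<le> length xs" "level xs (first_return xs) = 0"
proof -
  obtain k where k: "1 \<le> k" "k \<le> length xs" "level xs k = 0"
    using assms by (auto simp: returns_to_zero_def)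
  have "1 \<le> first_return xs \<and> level xs (first_return xs) = 0"
    unfolding first_return_def by (rule LeastI[of _ k]) (use k in auto)
  moreover have "first_return xs \<le> k"
    unfolding first_return_def using k by (intro Least_le) auto
  ultimately show "1 \<le> first_return xs" "first_return xs \<le> length xs" "level xs (first_return xs) = 0"
    using k by auto
qed

lemma level_reflect_first_return:
  "returns_to_zero xs \<Longrightarrow>
    level (reflect_first_return xs) k = (if k \<le> first_return xs then - level xs k else level xs k)"
  using first_return[of xs] by (simp add: reflect_first_return_def level_reflect_prefix)

lemma level_reflect_first_return_eq_0_iff:
  "returns_to_zero xs \<Longrightarrow> level (reflect_first_return xs) k = 0 \<longleftrightarrow> level xs k = 0"
  by (simp add: level_reflect_first_return)

lemma length_reflect_first_return [simp]: "length (reflect_first_return xs) = length xs"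
  by (simp add: reflect_first_return_def)

lemma returns_to_zero_reflect_first_return:
  "returns_to_zero xs \<Longrightarrow> returns_to_zero (reflect_first_return xs)"
  by (auto simp: returns_to_zero_def level_reflect_first_return_eq_0_iff)

lemma first_return_reflect_first_return:
  "returns_to_zero xs \<Longrightarrow> first_return (reflect_first_return xs) = first_return xs"
  by (simp add: first_return_def level_reflect_first_return_eq_0_iff)

lemma reflect_first_return_involution:
  "returns_to_zero xs \<Longrightarrow> reflect_first_return (reflect_first_return xs) = xs"
  by (simp add: reflect_first_return_def[of "reflect_first_return xs"]
      first_return_reflect_first_return) (simp add: reflect_first_return_def)

lemma height_reflect_first_return:
  "returns_to_zero xs \<Longrightarrow> height (reflect_first_return xs) = height xs"
  using level_reflect_first_return[of xs "length xs"] first_return[of xs]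
  by (cases "length xs \<le> first_return xs") (auto simp: level_length reflect_first_return_def)

lemma level_Suc_0_reflect_first_return:
  "returns_to_zero xs \<Longrightarrow> level (reflect_first_return xs) (Suc 0) = - level xs (Suc 0)"
  using first_return(1) by (simp add: level_reflect_first_return)

lemma ballot_Cons_iff: "ballot (x # ys) \<longleftrightarrow> x \<and> \<not> returns_to_zero (x # ys)"
proof
  assume "ballot (x # ys)"
  then have pos: "\<forall>k. 1 \<le> k \<and> k \<le> length (x # ys) \<longrightarrow> 0 < level (x # ys) k"
    by (simp add: ballot_iff_level)
  have "x"
    using pos[rule_format, of 1] by (auto split: if_splits)
  moreover have "\<not> returns_to_zero (x # ys)"
    using pos unfolding returns_to_zero_def by fastforce
  ultimately show "x \<and> \<not> returns_to_zero (x # ys)" ..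
next
  assume up: "x \<and> \<not> returns_to_zero (x # ys)"
  show "ballot (x # ys)"
    unfolding ballot_iff_level
  proof (intro allI impI, rule ccontr)
    fix k assume k: "1 \<le> k \<and> k \<le> length (x # ys)" and "\<not> 0 < level (x # ys) k"
    then obtain j where "1 \<le> j" "j \<le> k" "level (x # ys) j = 0"
      using level_ivt_down[of 1 k "x # ys" 0] up by auto
    then show False
      using up k by (auto simp: returns_to_zero_def)
  qed
qed

definition ballot_walks_above :: "nat \<Rightarrow> nat \<Rightarrow> bool list set" where
  "ballot_walks_above n h = {xs. length xs = n \<and> ballot xs \<and> int h < height xs}"

lemma finite_ballot_walks_above [simp]: "finite (ballot_walks_above n h)"
  by (simp add: ballot_walks_above_def finite_lists_length)

lemma ballot_walks_above_Suc:
  "ballot_walks_above (Suc m) h = Cons True ` walks_ge m (int h) - Collect returns_to_zero"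
  by (auto simp: ballot_walks_above_def walks_ge_def length_Suc_conv ballot_Cons_iff)

text \<open>The reflection principle.  Every walk counted on the right returns to 0, since it starts
  below 0 and ends above it.\<close>
lemma reflect_first_return_bij:
  "bij_betw reflect_first_return
    (Cons True ` walks_ge m (int h) \<inter> Collect returns_to_zero) (Cons False ` walks_ge m (int h + 2))"
proof -
  have down_returns: "returns_to_zero (False # ys)" if "ys \<in> walks_ge m (int h + 2)" for ys
  proof -
    have "level (False # ys) 1 \<le> 0"
      by simp
    moreover have "0 \<le> level (False # ys) (length (False # ys))"
      using that by (simp add: walks_ge_def level_length)
    ultimately show ?thesis
      using level_ivt_up[of 1 "length (False # ys)" "False # ys" 0]
      by (auto simp: returns_to_zero_def)
  qed
  have image_Cons: "xs \<in> Cons x ` walks_ge m l \<longleftrightarrow>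
      length xs = Suc m \<and> level xs (Suc 0) = (if x then 1 else -1) \<and> l + (if x then 1 else -1) \<le> height xs"
    for xs x l
    by (cases xs) (auto simp: walks_ge_def)
  show ?thesis
  proof (rule bij_betw_byWitness[where f' = reflect_first_return])
    show "reflect_first_return ` (Cons True ` walks_ge m (int h) \<inter> Collect returns_to_zero)
        \<subseteq> Cons False ` walks_ge m (int h + 2)"
    proof (rule image_subsetI)
      fix xs assume "xs \<in> Cons True ` walks_ge m (int h) \<inter> Collect returns_to_zero"
      then show "reflect_first_return xs \<in> Cons False ` walks_ge m (int h + 2)"
        by (simp add: image_Cons level_Suc_0_reflect_first_return height_reflect_first_return)
    qed
    show "reflect_first_return ` Cons False ` walks_ge m (int h + 2)
        \<subseteq> Cons True ` walks_ge m (int h) \<inter> Collect returns_to_zero"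
    proof (rule image_subsetI)
      fix xs assume xs: "xs \<in> Cons False ` walks_ge m (int h + 2)"
      with down_returns have "returns_to_zero xs"
        by blast
      with xs show "reflect_first_return xs \<in> Cons True ` walks_ge m (int h) \<inter> Collect returns_to_zero"
        by (simp add: image_Cons level_Suc_0_reflect_first_return height_reflect_first_return
            returns_to_zero_reflect_first_return)
    qed
  qed (use down_returns in \<open>auto simp: reflect_first_return_involution\<close>)
qed

theorem card_ballot_walks_above:
  "card (ballot_walks_above (Suc m) h) = m choose ((m + Suc h) div 2)"
proof -
  let ?U = "Cons True ` walks_ge m (int h)"
  have "card (ballot_walks_above (Suc m) h) = card ?U - card (?U \<inter> Collect returns_to_zero)"
    unfolding ballot_walks_above_Suc by (rule card_Diff_subset_Int) simp
  also have "card (?U \<inter> Collect returns_to_zero) = card (Cons False ` walks_ge m (int h + 2))"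
    using reflect_first_return_bij by (rule bij_betw_same_card)
  also have "card ?U - \<dots> = m choose ((m + Suc h) div 2)"
    by (simp add: card_image card_walks_ge_step)
  finally show ?thesis .
qed

section \<open>Walks overshooting a level\<close>

definition last_visit :: "int \<Rightarrow> bool list \<Rightarrow> nat" where
  "last_visit a xs = (GREATEST k. k \<le> length xs \<and> level xs k = a)"

definition reflect_after_last_visit :: "int \<Rightarrow> bool list \<Rightarrow> bool list" where
  "reflect_after_last_visit a xs = reflect_suffix (last_visit a xs) xs"

lemma length_reflect_after_last_visit [simp]: "length (reflect_after_last_visit a xs) = length xs"
  by (simp add: reflect_after_last_visit_def)

lemma last_visit:
  assumes "k \<le> length xs" "level xs k = a"
  shows "last_visit a xs \<le> length xs" "level xs (last_visit a xs) = a" "k \<le> last_visit a xs"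
proof -
  have "last_visit a xs \<le> length xs \<and> level xs (last_visit a xs) = a"
    unfolding last_visit_def by (rule GreatestI_nat[of _ k "length xs"]) (use assms in auto)
  then show "last_visit a xs \<le> length xs" "level xs (last_visit a xs) = a"
    by auto
  show "k \<le> last_visit a xs"
    unfolding last_visit_def by (rule Greatest_le_nat[of _ _ "length xs"]) (use assms in auto)
qed

lemma level_after_last_visit:
  assumes "k \<le> length xs" "level xs k = a" "height xs < a" "last_visit a xs < j" "j \<le> length xs"
  shows "level xs j < a"
proof (rule ccontr)
  assume "\<not> level xs j < a"
  moreover have "level xs (length xs) < a"
    using assms(3) by (simp add: level_length)
  ultimately obtain j' where "j \<le> j'" "j' \<le> length xs" "level xs j' = a"
    using level_ivt_down[of j "length xs" xs a] assms(5) by auto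
  then show False
    using last_visit(3)[of j' xs a] assms(4) by simp
qed

definition overshooting_walks :: "nat \<Rightarrow> nat \<Rightarrow> bool list set" where
  "overshooting_walks n a =
    {xs. length xs = n \<and> ballot xs \<and> height xs < int a \<and> (\<exists>k\<le>n. int a \<le> level xs k)}"

text \<open>Reflecting the part of the walk after its last visit to level \<open>a\<close> keeps it above
  \<open>a\<close>, hence positive, and sends its endpoint \<open>h < a\<close> to \<open>2 a - h > a\<close>.\<close>
lemma reflect_after_last_visit_overshooting:
  assumes "xs \<in> overshooting_walks n a"
  shows "reflect_after_last_visit (int a) xs \<in> ballot_walks_above n a"
    and "reflect_after_last_visit (int a) (reflect_after_last_visit (int a) xs) = xs"
proof -
  let ?s = "last_visit (int a) xs" and ?ys = "reflect_after_last_visit (int a) xs"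
  have xs: "length xs = n" "ballot xs" "height xs < int a"
    using assms by (auto simp: overshooting_walks_def)
  obtain k where "k \<le> n" "int a \<le> level xs k"
    using assms by (auto simp: overshooting_walks_def)
  moreover have "level xs n < int a"
    using xs by (simp add: level_length)
  ultimately obtain k0 where k0: "k0 \<le> length xs" "level xs k0 = int a"
    using level_ivt_down[of k n xs "int a"] xs(1) by auto
  note s = last_visit[OF k0]
  note after = level_after_last_visit[OF k0 xs(3)]
  have level_ys: "level ?ys j = (if j \<le> ?s then level xs j else 2 * int a - level xs j)" for j
    using s by (simp add: reflect_after_last_visit_def level_reflect_suffix)
  have "ballot ?ys"
    unfolding ballot_iff_level
  proof (intro allI impI)
    fix j assume j: "1 \<le> j \<and> j \<le> length ?ys"
    show "0 < level ?ys j"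
    proof (cases "j \<le> ?s")
      case True
      then show ?thesis using j xs(2) by (simp add: level_ys ballot_iff_level)
    next
      case False
      then show ?thesis using j after[of j] by (simp add: level_ys)
    qed
  qed
  moreover have "height ?ys = 2 * int a - height xs"
    using level_ys[of n] xs s(2) after
    by (cases "n \<le> ?s") (auto simp: level_length)
  ultimately show "?ys \<in> ballot_walks_above n a"
    using xs by (auto simp: ballot_walks_above_def)
  have "last_visit (int a) ?ys = ?s"
    unfolding last_visit_def[of _ ?ys]
  proof (rule Greatest_equality)
    show "?s \<le> length ?ys \<and> level ?ys ?s = int a"
      using s level_ys[of ?s] by simp
    show "j \<le> ?s" if "j \<le> length ?ys \<and> level ?ys j = int a" for j
    proof (rule ccontr)
      assume "\<not> j \<le> ?s"
      then show False
        using that after[of j] level_ys[of j] by simp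
    qed
  qed
  then show "reflect_after_last_visit (int a) ?ys = xs"
    by (simp add: reflect_after_last_visit_def[of _ ?ys]) (simp add: reflect_after_last_visit_def)
qed

lemma card_overshooting_walks_le: "card (overshooting_walks n a) \<le> card (ballot_walks_above n a)"
proof -
  have "inj_on (reflect_after_last_visit (int a)) (overshooting_walks n a)"
    by (rule inj_on_inverseI[where g = "reflect_after_last_visit (int a)"])
      (rule reflect_after_last_visit_overshooting(2))
  then show ?thesis
    using reflect_after_last_visit_overshooting(1)
    by (intro card_inj_on_le) auto
qed

lemma card_ballot_walks_above_le_bounded:
  "card (ballot_walks_above n b) \<le> card {xs. length xs = n \<and> bounded_walk b xs}
    + card (ballot_walks_above n (2 * b)) + card (ballot_walks_above n (Suc (2 * b)))"
proof -
  let ?B = "{xs. length xs = n \<and> bounded_walk b xs}"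
  have "ballot_walks_above n b \<subseteq> ?B \<union> ballot_walks_above n (2 * b) \<union> overshooting_walks n (Suc (2 * b))"
    by (auto simp: ballot_walks_above_def overshooting_walks_def bounded_walk_def level_def not_le)
  then have "card (ballot_walks_above n b)
      \<le> card (?B \<union> ballot_walks_above n (2 * b) \<union> overshooting_walks n (Suc (2 * b)))"
    by (intro card_mono) (auto simp: overshooting_walks_def finite_lists_length)
  also have "\<dots> \<le> card ?B + card (ballot_walks_above n (2 * b)) + card (overshooting_walks n (Suc (2 * b)))"
    by (intro order.trans[OF card_Un_le] add_right_mono card_Un_le)
  also have "\<dots> \<le> card ?B + card (ballot_walks_above n (2 * b)) + card (ballot_walks_above n (Suc (2 * b)))"
    using card_overshooting_walks_le by simp
  finally show ?thesis .
qed

section \<open>Binomial estimates\<close>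

lemma binomial_Suc_ratio: "real (m choose Suc j) = real (m choose j) * (real (m - j) / real (Suc j))"
proof -
  have "Suc j * (m choose Suc j) = (m - j) * (m choose j)"
    using binomial_absorption[of j m] binomial_absorb_comp[of m j] by simp
  then have "real (Suc j) * real (m choose Suc j) = real (m - j) * real (m choose j)"
    by (metis of_nat_mult)
  then show ?thesis
    by (simp add: field_simps)
qed

lemma binomial_shift_le_ratio_power:
  "real (m choose (p + d)) \<le> real (m choose p) * (real (m - p) / real (p + 1)) ^ d"
proof (induction d)
  case (Suc d)
  have ratio: "real (m - (p + d)) / real (Suc (p + d)) \<le> real (m - p) / real (p + 1)"
    by (intro frac_le) auto
  have "real (m choose (p + Suc d)) = real (m choose (p + d)) * (real (m - (p + d)) / real (Suc (p + d)))"
    using binomial_Suc_ratio[of m "p + d"] by simp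
  also have "\<dots> \<le> real (m choose p) * (real (m - p) / real (p + 1)) ^ d * (real (m - p) / real (p + 1))"
    by (intro mult_mono Suc.IH ratio) auto
  finally show ?case
    by (simp add: ac_simps)
qed simp

lemma binomial_shift_ge_ratio_power:
  "c + d \<le> p \<Longrightarrow> p \<le> m \<Longrightarrow> real (m choose c) * (real (m - p + 1) / real p) ^ d \<le> real (m choose (c + d))"
proof (induction d)
  case (Suc d)
  have ratio: "real (m - p + 1) / real p \<le> real (m - (c + d)) / real (Suc (c + d))"
    by (intro frac_le) (use Suc.prems in auto)
  have "real (m choose c) * (real (m - p + 1) / real p) ^ Suc d
      = real (m choose c) * (real (m - p + 1) / real p) ^ d * (real (m - p + 1) / real p)"
    by (simp add: mult.assoc)
  also have "\<dots> \<le> real (m choose (c + d)) * (real (m - (c + d)) / real (Suc (c + d)))"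
    by (intro mult_mono Suc.IH ratio) (use Suc.prems in auto)
  also have "\<dots> = real (m choose (c + Suc d))"
    using binomial_Suc_ratio[of m "c + d"] by simp
  finally show ?case .
qed simp

lemma central_binomial_Suc:
  "real (Suc k) * real ((2 * Suc k) choose Suc k) = 2 * real (2 * k + 1) * real ((2 * k) choose k)"
proof -
  have next_choose: "real ((2 * Suc k) choose Suc k) = fact (Suc (Suc (2 * k))) / (fact (Suc k) * fact (Suc k))"
    using binomial_fact[of "Suc k" "2 * Suc k", where 'a = real] by simp
  have choose: "real ((2 * k) choose k) = fact (2 * k) / (fact k * fact k)"
    using binomial_fact[of k "2 * k", where 'a = real] by simp
  have "real (Suc (Suc (2 * k))) = 2 * real (Suc k)" "real (Suc (2 * k)) = real (2 * k + 1)"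
    by simp_all
  then show ?thesis
    unfolding next_choose choose fact_Suc[of "Suc (2 * k)"] fact_Suc[of "2 * k"] fact_Suc[of k]
    by (simp add: field_simps del: of_nat_Suc)
qed

lemma central_binomial_sqrt_lower: "1 \<le> k \<Longrightarrow> 4 ^ k \<le> 2 * sqrt (real k) * real ((2 * k) choose k)"
proof -
  have sq: "(16::real) ^ k \<le> 4 * real k * real ((2 * k) choose k) ^ 2" if "1 \<le> k" for k
    using that
  proof (induction k rule: dec_induct)
    case (step k)
    define X where "X = real ((2 * k) choose k)"
    have "(16::real) ^ Suc k \<le> 16 * (4 * real k * X ^ 2)"
      using step.IH by (simp add: X_def)
    also have "\<dots> \<le> 16 * (X ^ 2 * real (2 * k + 1) ^ 2 / real (Suc k))"
      by (simp add: field_simps power2_eq_square mult_left_mono)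
    also have "\<dots> = 4 * real (Suc k) * (2 * real (2 * k + 1) * X / real (Suc k)) ^ 2"
      by (simp add: field_simps power2_eq_square del: of_nat_Suc)
    also have "2 * real (2 * k + 1) * X / real (Suc k) = real ((2 * Suc k) choose Suc k)"
      using central_binomial_Suc[of k] by (simp add: X_def field_simps)
    finally show ?case .
  qed simp
  assume "1 \<le> k"
  have "((4::real) ^ k) ^ 2 = 16 ^ k"
    by (induction k) (simp_all add: power_mult_distrib)
  also have "\<dots> \<le> (2 * sqrt (real k) * real ((2 * k) choose k)) ^ 2"
    using sq[OF \<open>1 \<le> k\<close>] by (simp add: power_mult_distrib)
  finally show ?thesis
    by (rule power2_le_imp_le) simp
qed

lemma binomial_middle_lower:
  assumes "2 \<le> m"
  shows "2 ^ Suc m / sqrt (real (Suc m)) \<le> 8 * real (m choose (m div 2))"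
proof -
  define k where "k = m div 2"
  have "1 \<le> k"
    using assms by (simp add: k_def)
  have "(2::real) ^ Suc m \<le> 2 ^ (2 * k + 2)"
    by (intro power_increasing) (auto simp: k_def)
  also have "\<dots> = 4 * 4 ^ k"
    by (simp add: power_mult power_add)
  also have "\<dots> \<le> 8 * sqrt (real k) * real ((2 * k) choose k)"
    using central_binomial_sqrt_lower[OF \<open>1 \<le> k\<close>] by simp
  also have "\<dots> \<le> 8 * sqrt (real (Suc m)) * real (m choose k)"
    by (intro mult_mono of_nat_mono binomial_right_mono) (auto simp: k_def)
  finally show ?thesis
    by (simp add: k_def divide_le_eq mult_ac)
qed

lemma power_le_exp_neg:
  assumes "0 \<le> r" "r \<le> 1 - y"
  shows "r ^ k \<le> exp (- (y * real k))"
proof -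
  have "r ^ k \<le> exp (- y) ^ k"
    using assms exp_ge_add_one_self[of "- y"] by (intro power_mono) auto
  then show ?thesis
    by (simp add: exp_of_nat_mult[symmetric] mult.commute)
qed

lemma exp_neg_le_power:
  assumes "0 \<le> w" "1 \<le> s * (1 + w)"
  shows "exp (- (w * real k)) \<le> s ^ k"
proof -
  have "0 < s"
    using assms by (smt (verit) mult_nonpos_nonneg)
  then have "1 \<le> s * exp w"
    using assms exp_ge_add_one_self[of w] by (smt (verit) mult_left_mono)
  then have "exp (- w) \<le> s"
    by (simp add: exp_minus field_simps)
  then have "exp (- w) ^ k \<le> s ^ k"
    by (intro power_mono) auto
  then show ?thesis
    by (simp add: exp_of_nat_mult[symmetric] mult.commute)
qed

lemma exp_neg_nine_tenths_le: "exp (- 9 / 10 :: real) \<le> 11 / 25"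
proof -
  have "1 + 9 / 10 + (9 / 10) ^ 2 / 2 \<le> exp (9 / 10 :: real)"
    by (rule exp_lower_Taylor_quadratic) simp
  then show ?thesis
    by (simp add: exp_minus field_simps power2_eq_square)
qed

lemma exp_neg_eleven_tenths_ge: "1 / 5 \<le> exp (- 11 / 10 :: real)"
proof -
  have "(9 / 20) ^ 2 \<le> exp (- 11 / 20 :: real) ^ 2"
    using exp_ge_add_one_self[of "- 11 / 20 :: real"] by (intro power_mono) auto
  also have "\<dots> = exp (- 11 / 10)"
    by (simp flip: exp_add add: power2_eq_square)
  finally show ?thesis
    by (simp add: power2_eq_square)
qed

lemma nat_half_bounds: "2 * (n div 2) \<le> n" "n \<le> Suc (2 * (n div 2))" for n :: nat
  by linarith+

lemma binomial_tail_le: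
  assumes b: "100 \<le> b" and lower: "b ^ 2 \<le> Suc m" and upper: "Suc m \<le> b ^ 2 + 2 * b"
  shows "real (m choose ((m + Suc (2 * b)) div 2)) \<le> 11 / 25 * real (m choose ((m + Suc b) div 2))"
proof -
  define p where "p = (m + Suc b) div 2"
  define d where "d = (m + Suc (2 * b)) div 2 - p"
  have "100 * b \<le> b ^ 2"
    using b by (simp add: power2_eq_square)
  then have "Suc b \<le> m"
    using b lower by linarith
  then have p: "m + b \<le> 2 * p" "p \<le> m" and d: "(m + Suc (2 * b)) div 2 = p + d" "b \<le> 2 * d + 1"
    using nat_half_bounds[of "m + Suc b"] nat_half_bounds[of "m + Suc (2 * b)"]
    unfolding d_def p_def by linarith+
  define B M P where "B = real b" and "M = real m" and "P = real p"
  have "real (Suc m) \<le> real (b ^ 2 + 2 * b)" "real (100 * b) \<le> real (b ^ 2)"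
    using upper \<open>100 * b \<le> b ^ 2\<close> by (simp_all only: of_nat_le_iff)
  then have real_facts: "100 \<le> B" "B + 1 \<le> M" "M + B \<le> 2 * P" "B - 1 \<le> 2 * real d" "M + 1 \<le> B ^ 2 + 2 * B"
    "100 * B \<le> B ^ 2" "real (m - p) = M - P"
    using b \<open>Suc b \<le> m\<close> p d unfolding B_def M_def P_def by (simp_all add: of_nat_diff)
  define r where "r = real (m - p) / real (p + 1)"
  define y where "y = (2 * B + 2) / (M + B + 2)"
  have "r \<le> 1 - y"
  proof -
    have "(M - P) * (M + B + 2) \<le> (M - B) / 2 * (M + B + 2)"
      using real_facts by (intro mult_right_mono) auto
    also have "\<dots> = (M - B) * ((M + B + 2) / 2)"
      by simp
    also have "\<dots> \<le> (M - B) * (P + 1)"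
      using real_facts by (intro mult_left_mono) auto
    finally have "(M - P) / (P + 1) \<le> (M - B) / (M + B + 2)"
      using real_facts by (simp add: field_simps P_def)
    moreover have "1 - y = (M - B) / (M + B + 2)"
      using real_facts by (simp add: y_def field_simps)
    ultimately show ?thesis
      using real_facts by (simp add: r_def P_def add.commute)
  qed
  moreover have "9 / 10 \<le> y * real d"
  proof -
    have "9 / 10 * (M + B + 2) \<le> B ^ 2 - 1"
      using real_facts by argo
    also have "\<dots> = (B + 1) * (B - 1)"
      by (simp add: algebra_simps power2_eq_square)
    also have "\<dots> \<le> (B + 1) * (2 * real d)"
      using real_facts by (intro mult_left_mono) auto
    finally show ?thesis
      using real_facts by (simp add: y_def field_simps)
  qed
  moreover have "0 \<le> r"
    by (simp add: r_def)
  ultimately have "r ^ d \<le> exp (- (y * real d))"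
    by (intro power_le_exp_neg)
  also have "\<dots> \<le> exp (- 9 / 10)"
    using \<open>9 / 10 \<le> y * real d\<close> by simp
  also have "\<dots> \<le> 11 / 25"
    by (rule exp_neg_nine_tenths_le)
  finally have "r ^ d \<le> 11 / 25" .
  have "real (m choose (p + d)) \<le> real (m choose p) * r ^ d"
    using binomial_shift_le_ratio_power[of m p d] by (simp add: r_def)
  also have "\<dots> \<le> real (m choose p) * (11 / 25)"
    using \<open>r ^ d \<le> 11 / 25\<close> by (intro mult_left_mono) auto
  finally show ?thesis
    unfolding d(1) p_def[symmetric] by (simp add: mult.commute)
qed

lemma binomial_middle_shift_ge:
  assumes b: "100 \<le> b" and lower: "b ^ 2 \<le> Suc m"
  shows "1 / 5 * real (m choose (m div 2)) \<le> real (m choose ((m + Suc b) div 2))"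
proof -
  define c where "c = m div 2"
  define p where "p = (m + Suc b) div 2"
  define d where "d = p - c"
  have "100 * b \<le> b ^ 2"
    using b by (simp add: power2_eq_square)
  then have "Suc b \<le> m"
    using b lower by linarith
  then have p: "p = c + d" "2 * p \<le> m + b + 1" "p \<le> m" "1 \<le> p" and d: "2 * d \<le> b + 2"
    using nat_half_bounds[of m] nat_half_bounds[of "m + Suc b"]
    unfolding c_def d_def p_def by linarith+
  define B M P where "B = real b" and "M = real m" and "P = real p"
  have "real (b ^ 2) \<le> real (Suc m)" "real (100 * b) \<le> real (b ^ 2)"
    using lower \<open>100 * b \<le> b ^ 2\<close> by (simp_all only: of_nat_le_iff)
  then have real_facts: "100 \<le> B" "B + 1 \<le> M" "2 * P \<le> M + B + 1" "1 \<le> P" "2 * real d \<le> B + 2"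
    "B ^ 2 \<le> M + 1" "100 * B \<le> B ^ 2" "real (m - p + 1) = M - P + 1"
    using b \<open>Suc b \<le> m\<close> p d unfolding B_def M_def P_def by (simp_all add: of_nat_diff)
  define s where "s = real (m - p + 1) / real p"
  define w where "w = 2 * B / (M - B + 1)"
  have "1 \<le> s * (1 + w)"
  proof -
    have "P * (M - B + 1) \<le> (M + B + 1) / 2 * (M - B + 1)"
      using real_facts by (intro mult_right_mono) auto
    also have "\<dots> = (M - B + 1) / 2 * (M + B + 1)"
      by simp
    also have "\<dots> \<le> (M - P + 1) * (M + B + 1)"
      using real_facts by (intro mult_right_mono) auto
    finally have "P * (M - B + 1) \<le> (M - P + 1) * (M + B + 1)" .
    moreover have "0 < P" "0 < M - B + 1"
      using real_facts by auto
    moreover have "s * (1 + w) = (M - P + 1) * (M + B + 1) / (P * (M - B + 1))"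
      unfolding s_def real_facts(8) P_def[symmetric] w_def
      using \<open>0 < M - B + 1\<close> by (simp add: field_simps)
    ultimately show ?thesis
      by (simp add: le_divide_eq)
  qed
  moreover have "w * real d \<le> 11 / 10"
  proof -
    have "B * (2 * real d) \<le> B * (B + 2)"
      using real_facts by (intro mult_left_mono) auto
    also have "\<dots> = B ^ 2 + 2 * B"
      by (simp add: algebra_simps power2_eq_square)
    also have "\<dots> \<le> 11 / 10 * (M - B + 1)"
      using real_facts by argo
    finally show ?thesis
      using real_facts by (simp add: w_def field_simps)
  qed
  moreover have "0 \<le> w"
    using real_facts by (simp add: w_def)
  ultimately have "exp (- 11 / 10) \<le> exp (- (w * real d))" and "exp (- (w * real d)) \<le> s ^ d"
    by (simp_all add: exp_neg_le_power)
  then have "1 / 5 \<le> s ^ d"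
    using exp_neg_eleven_tenths_ge by linarith
  have "real (m choose c) * (1 / 5) \<le> real (m choose c) * s ^ d"
    using \<open>1 / 5 \<le> s ^ d\<close> by (intro mult_left_mono) auto
  also have "\<dots> \<le> real (m choose (c + d))"
    using binomial_shift_ge_ratio_power[of c d p m] p by (simp add: s_def)
  finally show ?thesis
    unfolding p(1)[symmetric] c_def[symmetric] p_def[symmetric] by (simp add: mult.commute)
qed

lemma binomial_difference_lower:
  assumes b: "100 \<le> b" and lower: "b ^ 2 \<le> Suc m" and upper: "Suc m \<le> b ^ 2 + 2 * b"
  shows "2 ^ Suc m / sqrt (real (Suc m)) / 400 \<le> real (m choose ((m + Suc b) div 2))
    - real (m choose ((m + Suc (2 * b)) div 2)) - real (m choose ((m + Suc (Suc (2 * b))) div 2))"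
proof -
  define X where "X = 2 ^ Suc m / sqrt (real (Suc m))"
  define C where "C k = real (m choose k)" for k
  have "100 * b \<le> b ^ 2"
    using b by (simp add: power2_eq_square)
  then have "Suc (Suc (2 * b)) \<le> m" "2 \<le> m"
    using b lower by linarith+
  then have "C ((m + Suc (Suc (2 * b))) div 2) \<le> C ((m + Suc (2 * b)) div 2)"
    unfolding C_def of_nat_le_iff by (intro binomial_antimono) auto
  moreover have "X \<le> 8 * C (m div 2)"
    unfolding X_def C_def using \<open>2 \<le> m\<close> by (rule binomial_middle_lower)
  moreover have "C ((m + Suc (2 * b)) div 2) \<le> 11 / 25 * C ((m + Suc b) div 2)"
    and "1 / 5 * C (m div 2) \<le> C ((m + Suc b) div 2)"
    unfolding C_def using binomial_tail_le[OF assms] binomial_middle_shift_ge[OF b lower] by auto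
  moreover have "0 \<le> C ((m + Suc b) div 2)"
    by (simp add: C_def)
  ultimately show ?thesis
    unfolding X_def[symmetric] C_def[symmetric] by linarith
qed

lemma floor_sqrt_bounds:
  assumes "b = nat \<lfloor>sqrt (real n)\<rfloor>"
  shows "b ^ 2 \<le> n" "n < (b + 1) ^ 2"
proof -
  have "real b = of_int \<lfloor>sqrt (real n)\<rfloor>"
    using assms by simp
  moreover have "real (b + 1) = real b + 1"
    by simp
  ultimately have "real b \<le> sqrt (real n)" "sqrt (real n) < real (b + 1)"
    using floor_correct[of "sqrt (real n)"] unfolding of_int_add of_int_1 by linarith+
  then have "real b ^ 2 \<le> sqrt (real n) ^ 2" "sqrt (real n) ^ 2 < real (b + 1) ^ 2"
    by (intro power_mono power_strict_mono; simp)+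
  then have "real (b ^ 2) \<le> real n" "real n < real ((b + 1) ^ 2)"
    by (simp_all only: of_nat_power real_sqrt_pow2 of_nat_0_le_iff)
  then show "b ^ 2 \<le> n" "n < (b + 1) ^ 2"
    by (simp_all only: of_nat_le_iff of_nat_less_iff)
qed

theorem lemma12:
  shows "(\<lambda>n. real (num_bounded_walks n)) \<in> \<Omega>(\<lambda>n. 2 ^ n / sqrt (real n))"
proof (rule landau_omega.bigI[where c = "1 / 400"])
  show "\<forall>\<^sub>F n in at_top. 1 / 400 * norm (2 ^ n / sqrt (real n) :: real) \<le> norm (real (num_bounded_walks n))"
  proof (rule eventually_at_top_linorderI[of 10000])
    fix n :: nat assume "10000 \<le> n"
    then obtain m where n: "n = Suc m"
      by (cases n) auto
    define b where "b = nat \<lfloor>sqrt (real n)\<rfloor>"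
    note b_bounds = floor_sqrt_bounds[OF b_def]
    have "100 \<le> b"
    proof (rule ccontr)
      assume "\<not> 100 \<le> b"
      then have "(b + 1) ^ 2 \<le> 100 ^ 2"
        by (intro power_mono) auto
      then show False
        using b_bounds(2) \<open>10000 \<le> n\<close> by simp
    qed
    moreover have "b ^ 2 \<le> Suc m" "Suc m \<le> b ^ 2 + 2 * b"
      using b_bounds by (simp_all add: n power2_eq_square)
    ultimately have "2 ^ n / sqrt (real n) / 400 \<le> real (card (ballot_walks_above n b))
        - real (card (ballot_walks_above n (2 * b))) - real (card (ballot_walks_above n (Suc (2 * b))))"
      unfolding n card_ballot_walks_above by (rule binomial_difference_lower)
    also have "\<dots> \<le> real (num_bounded_walks n)"
      using card_ballot_walks_above_le_bounded[of n b] by (simp add: num_bounded_walks_def b_def)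
    finally show "1 / 400 * norm (2 ^ n / sqrt (real n) :: real) \<le> norm (real (num_bounded_walks n))"
      by simp
  qed
qed simp

end
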